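(* For a prime $p$ let $S_p$ be the set of words $w\in\{B,R\}^p$ such that for no $r\in\{1,\dots,p-1\}$ and $i\in\{0,\dots,p-1\}$ are $w_i,w_{i+r},w_{i+2r},w_{i+3r}$ (indices mod $p$) all equal. Then $|S_5|=20$, $S_5$ splits into 4 orbits under $D_5$ and 2 orbits under $D_5\times\langle\tau\rangle$; and $|S_{11}|=44$, $S_{11}$ splits into 2 orbits under $D_{11}$ and 1 orbit under $D_{11}\times\langle\tau\rangle$. In particular $\texttt{BBBRR}\in S_5$ and $\texttt{BBBRBBRBRRR}\in S_{11}$.
   Context: The dihedral group $D_p$ acts on $\{B,R\}^p$ (indices mod $p$) via rotations $(\rho_k w)_i=w_{i-k}$ and reflections $(\sigma_k w)_i=w_{k-i}$. The global color swap $\tau$ interchanges $B\leftrightarrow R$ in every position. *)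

theory Defs
  imports Main
begin

datatype color = B | R

definition words :: "nat \<Rightarrow> color list set" where
  "words p = {w. length w = p}"

definition S :: "nat \<Rightarrow> color list set" where
  "S p = {w \<in> words p. \<not> (\<exists>r\<in>{1..p-1}. \<exists>i<p.
      w ! ((i + r) mod p) = w ! i \<and> w ! ((i + 2*r) mod p) = w ! i \<and>
      w ! ((i + 3*r) mod p) = w ! i)}"

text \<open>Rotation: (rho_k w)_i = w_{i-k}; reflection: (sigma_k w)_i = w_{k-i}, indices mod p.\<close>
definition rho :: "nat \<Rightarrow> nat \<Rightarrow> color list \<Rightarrow> color list" where
  "rho p k w = map (\<lambda>i. w ! ((i + p - k mod p) mod p)) [0..<p]"

definition sigma :: "nat \<Rightarrow> nat \<Rightarrow> color list \<Rightarrow> color list" where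
  "sigma p k w = map (\<lambda>i. w ! ((k mod p + p - i) mod p)) [0..<p]"

definition swap :: "color \<Rightarrow> color" where
  "swap c = (case c of B \<Rightarrow> R | R \<Rightarrow> B)"

definition tau :: "color list \<Rightarrow> color list" where
  "tau w = map swap w"

definition Dih :: "nat \<Rightarrow> (color list \<Rightarrow> color list) set" where
  "Dih p = {rho p k | k. k < p} \<union> {sigma p k | k. k < p}"

definition DihTau :: "nat \<Rightarrow> (color list \<Rightarrow> color list) set" where
  "DihTau p = Dih p \<union> {tau \<circ> g | g. g \<in> Dih p}"

definition orbit :: "('a \<Rightarrow> 'a) set \<Rightarrow> 'a \<Rightarrow> 'a set" where
  "orbit G x = {g x | g. g \<in> G}"

definition orbits :: "('a \<Rightarrow> 'a) set \<Rightarrow> 'a set \<Rightarrow> 'a set set" where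
  "orbits G X = orbit G ` X"

end

theory Submission
  imports Defs
begin

text \<open>All claims are finite computations. What needs proof is only that they can be evaluated:
  \<open>S p\<close> is the set of words built letter by letter whose completion passes the progression test,
  and the orbit of a word under \<open>D\<^sub>p\<close> (resp. \<open>D\<^sub>p \<times> \<langle>\<tau>\<rangle>\<close>) is the set of its \<open>2p\<close>
  (resp. \<open>4p\<close>) images.\<close>

definition ap_free :: "nat \<Rightarrow> color list \<Rightarrow> bool" where
  "ap_free p w \<longleftrightarrow> (\<forall>r\<in>set [1..<p]. \<forall>i\<in>set [0..<p].
      \<not> (w ! ((i + r) mod p) = w ! i \<and> w ! ((i + 2*r) mod p) = w ! i \<and>
         w ! ((i + 3*r) mod p) = w ! i))"

lemma mem_S_iff: "w \<in> S p \<longleftrightarrow> length w = p \<and> ap_free p w"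
proof -
  have "{1..p-1} = set [1..<p]"
    by auto
  then show ?thesis
    by (auto simp: S_def words_def ap_free_def)
qed

text \<open>Generating the words recursively keeps every intermediate term small; evaluating a filter
  over \<open>List.n_lists p [B, R]\<close> instead is an order of magnitude slower for \<open>p = 11\<close>.\<close>

fun extensions :: "(color list \<Rightarrow> bool) \<Rightarrow> nat \<Rightarrow> color list \<Rightarrow> color list list" where
  "extensions P 0 w = (if P w then [w] else [])"
| "extensions P (Suc n) w = extensions P n (B # w) @ extensions P n (R # w)"

lemma set_extensions:
  "set (extensions P n w) = {v @ w | v. length v = n \<and> P (v @ w)}"
proof (induction n arbitrary: w)
  case 0
  then show ?case by auto
next
  case (Suc n)
  show ?case
  proof (intro set_eqI iffI)
    fix u assume "u \<in> set (extensions P (Suc n) w)"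
    then obtain c v where "u = v @ c # w" "length v = n" "P u"
      using Suc.IH by auto
    then show "u \<in> {v @ w | v. length v = Suc n \<and> P (v @ w)}"
      by (intro CollectI exI[of _ "v @ [c]"]) auto
  next
    fix u assume "u \<in> {v @ w | v. length v = Suc n \<and> P (v @ w)}"
    then obtain v c where "u = v @ c # w" "length v = n" "P u"
      by (auto simp: length_Suc_conv_rev)
    then show "u \<in> set (extensions P (Suc n) w)"
      using Suc.IH by (cases c) auto
  qed
qed

lemma S_eq_set_extensions: "S p = set (extensions (ap_free p) p [])"
  by (auto simp: mem_S_iff set_extensions)

definition dihedral_images :: "nat \<Rightarrow> color list \<Rightarrow> color list list" where
  "dihedral_images p w = map (\<lambda>k. rho p k w) [0..<p] @ map (\<lambda>k. sigma p k w) [0..<p]"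

lemma orbit_Dih: "orbit (Dih p) w = set (dihedral_images p w)"
  unfolding orbit_def Dih_def dihedral_images_def by fastforce

lemma orbit_Un_compose:
  "orbit (G \<union> {f \<circ> g | g. g \<in> G}) x = orbit G x \<union> f ` orbit G x"
  unfolding orbit_def by force

lemma orbit_DihTau:
  "orbit (DihTau p) w = set (dihedral_images p w @ map tau (dihedral_images p w))"
  unfolding DihTau_def orbit_Un_compose orbit_Dih by simp

lemma orbits_set: "orbits G (set xs) = set (map (orbit G) xs)"
  unfolding orbits_def by simp

lemmas S_orbits_executable = S_eq_set_extensions orbits_set orbit_Dih orbit_DihTau

lemma card_S_5: "card (S 5) = 20"
  unfolding S_orbits_executable by code_simp

lemma card_orbits_Dih_S_5: "card (orbits (Dih 5) (S 5)) = 4"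
  unfolding S_orbits_executable by code_simp

lemma card_orbits_DihTau_S_5: "card (orbits (DihTau 5) (S 5)) = 2"
  unfolding S_orbits_executable by code_simp

lemma card_S_11: "card (S 11) = 44"
  unfolding S_orbits_executable by code_simp

lemma card_orbits_Dih_S_11: "card (orbits (Dih 11) (S 11)) = 2"
  unfolding S_orbits_executable by code_simp

lemma card_orbits_DihTau_S_11: "card (orbits (DihTau 11) (S 11)) = 1"
  unfolding S_orbits_executable by code_simp

theorem mainTheorem11:
  shows "card (S 5) = 20 \<and> card (orbits (Dih 5) (S 5)) = 4 \<and>
         card (orbits (DihTau 5) (S 5)) = 2 \<and>
         card (S 11) = 44 \<and> card (orbits (Dih 11) (S 11)) = 2 \<and>
         card (orbits (DihTau 11) (S 11)) = 1 \<and>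
         [B,B,B,R,R] \<in> S 5 \<and> [B,B,B,R,B,B,R,B,R,R,R] \<in> S 11"
proof -
  have "[B,B,B,R,R] \<in> S 5" "[B,B,B,R,B,B,R,B,R,R,R] \<in> S 11"
    unfolding mem_S_iff by code_simp+
  then show ?thesis
    using card_S_5 card_orbits_Dih_S_5 card_orbits_DihTau_S_5
      card_S_11 card_orbits_Dih_S_11 card_orbits_DihTau_S_11
    by blast
qed

end
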